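(* Let $p,q$ be distributions on $\mathbb{R}$ with $\widetilde W_1(p,q)\le\epsilon$, and let $g(x)=x$ or $g(x)=|x|$. Then there exist $r_p\in\mathbb{F}(p,7\epsilon,g)$ and $r_q\in\mathbb{F}(q,7\epsilon,g)$ such that $r_p$ is less than $r_q$ in the convex order with respect to $g(X)$; that is, for every convex function $f$ for which the expectations exist, $\mathbb{E}_{r_p}[f(g(X))]\le\mathbb{E}_{r_q}[f(g(X))]$.
   Context: On $\mathbb{R}$, $\widetilde W_1(p,q)=\sup_{u\in\mathcal{U}'}|\mathbb{E}_p[u(X)]-\mathbb{E}_q[u(X)]|$ with $\mathcal{U}'=\{x\mapsto\max(0,vx-a):|v|\le1,a\in\mathbb{R}\}\cup\{x\mapsto vx:|v|\le1\}$. Friendly perturbation: $r\in\mathbb{F}(p,\eta,g)$ means there is a coupling $\pi_{X,Y}$ of $X\sim p$, $Y\sim r$ with $\mathbb{E}_\pi|X-Y|\le\eta$ such that $g(Y)$ lies between $g(X)$ and $\mathbb{E}_r[g(Y)]$ almost surely. *)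

theory Defs
  imports "HOL-Probability.Probability"
begin

definition real_distr :: "real measure \<Rightarrow> bool" where
  "real_distr p \<longleftrightarrow> prob_space p \<and> sets p = sets borel"

definition Uprime :: "(real \<Rightarrow> real) set" where
  "Uprime = {(\<lambda>x. max 0 (v * x - a)) | v a. \<bar>v\<bar> \<le> 1}
          \<union> {(\<lambda>x. v * x) | v. \<bar>v\<bar> \<le> 1}"

definition W1tilde :: "real measure \<Rightarrow> real measure \<Rightarrow> ereal" where
  "W1tilde p q = (SUP u\<in>Uprime. ereal \<bar>(\<integral>x. u x \<partial>p) - (\<integral>x. u x \<partial>q)\<bar>)"

definition coupling :: "(real \<times> real) measure \<Rightarrow> real measure \<Rightarrow> real measure \<Rightarrow> bool" where
  "coupling \<pi> p r \<longleftrightarrow> prob_space \<pi> \<and> sets \<pi> = sets (borel \<Otimes>\<^sub>M borel)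
     \<and> distr \<pi> borel fst = p \<and> distr \<pi> borel snd = r"

definition friendly :: "real measure \<Rightarrow> real \<Rightarrow> (real \<Rightarrow> real) \<Rightarrow> real measure set" where
  "friendly p \<eta> g = {r. real_distr r \<and> integrable r g \<and>
     (\<exists>\<pi>. coupling \<pi> p r
        \<and> (\<integral>\<^sup>+ z. ennreal \<bar>fst z - snd z\<bar> \<partial>\<pi>) \<le> ennreal \<eta>
        \<and> (AE z in \<pi>. min (g (fst z)) (\<integral>y. g y \<partial>r) \<le> g (snd z)
                    \<and> g (snd z) \<le> max (g (fst z)) (\<integral>y. g y \<partial>r)))}"

definition convex_order_wrt :: "(real \<Rightarrow> real) \<Rightarrow> real measure \<Rightarrow> real measure \<Rightarrow> bool" where
  "convex_order_wrt g r s \<longleftrightarrow>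
     (\<forall>f::real \<Rightarrow> real. convex_on UNIV f \<longrightarrow> integrable r (\<lambda>x. f (g x))
        \<longrightarrow> integrable s (\<lambda>x. f (g x))
        \<longrightarrow> (\<integral>x. f (g x) \<partial>r) \<le> (\<integral>x. f (g x) \<partial>s))"

end

theory Submission
  imports Defs
begin

text \<open>
  The test functions \<open>\<plusminus>x - a\<close> in U' show that under p and q the means and the hinge integrals
  \<open>E (g X - a)\<^sup>+\<close> of g X differ by at most e = 2\<epsilon>. Clip g X under p between two levels, chosen
  so that its mean becomes \<open>E\<^sub>q g\<close> while each tail loses an extra e; this moves every value of g
  towards the target mean at total cost at most 3e = 6\<epsilon>, and makes all hinge integrals at most
  those of q. For equal means, domination of all hinge integrals is the convex order, since
  every convex function is the limit of maxima of finitely many tangents, i.e. of affine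
  functions plus nonnegative combinations of hinges. For g = id or g = abs the clipping is
  realised by a map of the real line moving x by exactly the change of g x, so its image of p
  is a friendly perturbation; q itself serves as the perturbation of q.
\<close>

section \<open>Maxima of tangents of convex functions\<close>

lemma convex_on_UNIV_obtains_subgradient:
  fixes f :: "real \<Rightarrow> real"
  assumes "convex_on UNIV f"
  obtains d where "\<And>x y. f x + d x * (y - x) \<le> f y"
proof
  fix x y :: real
  show "f x + Inf ((\<lambda>t. (f x - f t) / (x - t)) ` ({x<..} \<inter> UNIV)) * (y - x) \<le> f y"
    using convex_le_Inf_differential[OF assms, of x y] by simp
qed

lemma subgradient_mono:
  fixes f d :: "real \<Rightarrow> real"
  assumes "\<And>x y. f x + d x * (y - x) \<le> f y"
  shows "mono d"
proof
  fix x y :: real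
  assume "x \<le> y"
  have "(d y - d x) * (y - x) \<ge> 0"
    using assms[of x y] assms[of y x] by (simp add: algebra_simps)
  then show "d x \<le> d y"
    using \<open>x \<le> y\<close> by (cases "x = y") (auto simp: zero_le_mult_iff)
qed

definition max_tangents :: "(real \<Rightarrow> real) \<Rightarrow> (real \<Rightarrow> real) \<Rightarrow> real set \<Rightarrow> real \<Rightarrow> real" where
  "max_tangents f d S x = Max ((\<lambda>t. f t + d t * (x - t)) ` S)"

lemma max_tangents_ge:
  "finite S \<Longrightarrow> t \<in> S \<Longrightarrow> f t + d t * (x - t) \<le> max_tangents f d S x"
  unfolding max_tangents_def by (intro Max_ge) auto

lemma max_tangents_le:
  assumes "\<And>x y. f x + d x * (y - x) \<le> f y" and "finite S" "S \<noteq> {}"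
  shows "max_tangents f d S x \<le> f x"
  unfolding max_tangents_def using assms by (intro Max.boundedI) auto

lemma max_tangents_singleton: "max_tangents f d {t} x = (f t - d t * t) + d t * x"
  unfolding max_tangents_def by (simp add: algebra_simps)

text \<open>Tangent slopes increase, so a tangent at a point to the right of all previous ones
  adds a hinge.\<close>

lemma max_tangents_insert_greater:
  assumes sg: "\<And>x y. f x + d x * (y - x) \<le> f y" and md: "mono d"
    and A: "finite A" "A \<noteq> {}" and b: "\<And>t. t \<in> A \<Longrightarrow> t < b"
  defines "a \<equiv> Max A"
  shows "max_tangents f d (insert b A) x
           = max_tangents f d A x + max 0 ((d b - d a) * x + (f b - d b * b - (f a - d a * a)))"
proof -
  let ?T = "\<lambda>t. f t + d t * (x - t)"
  have aA: "a \<in> A" and ab: "a < b" using A b unfolding a_def by auto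
  have insert: "max_tangents f d (insert b A) x = max (?T b) (max_tangents f d A x)"
    using A unfolding max_tangents_def by simp
  show ?thesis
  proof (cases "a \<le> x")
    case True
    have "?T t \<le> ?T a" if "t \<in> A" for t
    proof -
      have "d t \<le> d a" using that A md unfolding a_def by (simp add: monoD)
      then have "(d a - d t) * (x - a) \<ge> 0" using True by simp
      moreover have "f t + d t * (a - t) \<le> f a" by (rule sg)
      ultimately show ?thesis by (simp add: algebra_simps)
    qed
    then have "max_tangents f d A x = ?T a"
      using A aA unfolding max_tangents_def by (intro antisym Max.boundedI Max_ge) auto
    then show ?thesis unfolding insert by (simp add: max_def algebra_simps)
  next
    case False
    have "(d b - d a) * (a - x) \<ge> 0" using False ab md by (simp add: monoD)
    moreover have "f b + d b * (a - b) \<le> f a" by (rule sg)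
    ultimately have "?T b \<le> ?T a" by (simp add: algebra_simps)
    also have "\<dots> \<le> max_tangents f d A x" using A(1) aA by (rule max_tangents_ge)
    finally show ?thesis unfolding insert using \<open>?T b \<le> ?T a\<close> by (simp add: max_def algebra_simps)
  qed
qed

definition grid :: "nat \<Rightarrow> real set" where
  "grid n = (\<lambda>i. real_of_int i / real (Suc n)) ` {- (int (Suc n))\<^sup>2 .. (int (Suc n))\<^sup>2}"

lemma finite_grid: "finite (grid n)"
  unfolding grid_def by simp

lemma zero_in_grid: "0 \<in> grid n"
  unfolding grid_def by (rule image_eqI[of _ _ 0]) auto

lemma grid_nonempty: "grid n \<noteq> {}"
  using zero_in_grid by blast

lemma grid_approx_below:
  fixes x :: real
  assumes "\<bar>x\<bar> \<le> real n"
  obtains y where "y \<in> grid n" "y \<le> x" "x - y \<le> 1 / real (Suc n)"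
proof
  define m where "m = real (Suc n)"
  define i where "i = \<lfloor>x * m\<rfloor>"
  have m: "m \<ge> 1" unfolding m_def by simp
  have i: "real_of_int i \<le> x * m" "x * m < real_of_int i + 1" unfolding i_def by linarith+
  have "\<bar>x * m\<bar> \<le> real n * m" using assms m by (simp add: abs_mult mult_right_mono)
  moreover have "real n * m + 1 \<le> m\<^sup>2" unfolding m_def by (simp add: power2_eq_square algebra_simps)
  ultimately have "\<bar>real_of_int i\<bar> \<le> m\<^sup>2" using i by linarith
  then have "\<bar>i\<bar> \<le> (int (Suc n))\<^sup>2" unfolding m_def
    by (metis of_int_abs of_int_le_iff of_int_of_nat_eq of_int_power)
  then show "real_of_int i / m \<in> grid n" unfolding grid_def m_def by (intro imageI) auto
  show "real_of_int i / m \<le> x" using i m by (simp add: divide_le_eq)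
  have "x - real_of_int i / m = (x * m - real_of_int i) / m" using m by (simp add: field_simps)
  also have "\<dots> \<le> 1 / m" using i m by (intro divide_right_mono) auto
  finally show "x - real_of_int i / m \<le> 1 / real (Suc n)" unfolding m_def .
qed

lemma tendsto_max_tangents_grid:
  assumes sg: "\<And>x y. f x + d x * (y - x) \<le> f y" and md: "mono d"
  shows "(\<lambda>n. max_tangents f d (grid n) x) \<longlonglongrightarrow> f x"
proof (rule tendsto_sandwich[OF _ _ _ tendsto_const])
  define K where "K = d x - d (x - 1)"
  have lower: "f x - K / real (Suc n) \<le> max_tangents f d (grid n) x"
    if n: "\<bar>x\<bar> \<le> real n" for n
  proof -
    obtain y where y: "y \<in> grid n" "y \<le> x" "x - y \<le> 1 / real (Suc n)"
      using grid_approx_below[OF n] by blast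
    have "1 / real (Suc n) \<le> 1" by simp
    then have "x - 1 \<le> y" using y(3) by linarith
    then have "d (x - 1) \<le> d y" "d y \<le> d x"
      using y(2) by (simp_all add: monoD[OF md])
    then have "(d x - d y) * (x - y) \<le> K * (1 / real (Suc n))"
      unfolding K_def using y by (intro mult_mono) auto
    moreover have "f x \<le> f y + d y * (x - y) + (d x - d y) * (x - y)"
      using sg[of x y] by (simp add: algebra_simps)
    moreover have "f y + d y * (x - y) \<le> max_tangents f d (grid n) x"
      using finite_grid y(1) by (rule max_tangents_ge)
    ultimately show ?thesis by simp
  qed
  show "\<forall>\<^sub>F n in sequentially. f x - K / real (Suc n) \<le> max_tangents f d (grid n) x"
  proof (rule eventually_sequentiallyI[of "nat \<lceil>\<bar>x\<bar>\<rceil>"])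
    fix n assume "nat \<lceil>\<bar>x\<bar>\<rceil> \<le> n"
    then show "f x - K / real (Suc n) \<le> max_tangents f d (grid n) x"
      by (intro lower) linarith
  qed
  show "\<forall>\<^sub>F n in sequentially. max_tangents f d (grid n) x \<le> f x"
    by (intro always_eventually allI max_tangents_le[OF sg finite_grid grid_nonempty])
  have "(\<lambda>n. f x - K * inverse (real (Suc n))) \<longlonglongrightarrow> f x - K * 0"
    by (intro tendsto_intros LIMSEQ_inverse_real_of_nat)
  then show "(\<lambda>n. f x - K / real (Suc n)) \<longlonglongrightarrow> f x"
    by (simp add: divide_inverse)
qed

section \<open>Hinge integrals\<close>

context prob_space
begin

lemma integrable_hinge:
  fixes W :: "'a \<Rightarrow> real"
  shows "integrable M W \<Longrightarrow> integrable M (\<lambda>x. max 0 (W x - a))"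
  by (intro integrable_max integrable_diff) auto

lemma integrable_hinge_reflect:
  fixes W :: "'a \<Rightarrow> real"
  shows "integrable M W \<Longrightarrow> integrable M (\<lambda>x. max 0 (a - W x))"
  by (intro integrable_max integrable_diff) auto

lemma hinge_integral_nonneg:
  fixes W :: "'a \<Rightarrow> real"
  shows "0 \<le> (\<integral>x. max 0 (W x - a) \<partial>M)"
  by (rule integral_nonneg_AE) auto

lemma hinge_integral_antimono:
  fixes W :: "'a \<Rightarrow> real"
  shows "integrable M W \<Longrightarrow> a \<le> b \<Longrightarrow> (\<integral>x. max 0 (W x - b) \<partial>M) \<le> (\<integral>x. max 0 (W x - a) \<partial>M)"
  by (intro Bochner_Integration.integral_mono integrable_hinge) auto

lemma hinge_integral_lipschitz:
  fixes W :: "'a \<Rightarrow> real"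
  assumes "integrable M W"
  shows "\<bar>(\<integral>x. max 0 (W x - a) \<partial>M) - (\<integral>x. max 0 (W x - b) \<partial>M)\<bar> \<le> \<bar>a - b\<bar>"
proof -
  have diff: "integrable M (\<lambda>x. max 0 (W x - a) - max 0 (W x - b))"
    using assms by (intro Bochner_Integration.integrable_diff integrable_hinge)
  have "\<bar>(\<integral>x. max 0 (W x - a) \<partial>M) - (\<integral>x. max 0 (W x - b) \<partial>M)\<bar>
      = \<bar>\<integral>x. max 0 (W x - a) - max 0 (W x - b) \<partial>M\<bar>"
    using assms by (simp add: integrable_hinge)
  also have "\<dots> \<le> (\<integral>x. \<bar>max 0 (W x - a) - max 0 (W x - b)\<bar> \<partial>M)"
    by (rule integral_abs_bound)
  also have "\<dots> \<le> (\<integral>x. \<bar>a - b\<bar> \<partial>M)"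
    using diff by (intro Bochner_Integration.integral_mono integrable_abs) (auto simp: max_def)
  finally show ?thesis by (simp add: prob_space)
qed

lemma expectation_minus_le_hinge_integral:
  fixes W :: "'a \<Rightarrow> real"
  assumes "integrable M W"
  shows "(\<integral>x. W x \<partial>M) - a \<le> (\<integral>x. max 0 (W x - a) \<partial>M)"
proof -
  have "(\<integral>x. W x - a \<partial>M) \<le> (\<integral>x. max 0 (W x - a) \<partial>M)"
    using assms by (intro Bochner_Integration.integral_mono integrable_hinge) auto
  then show ?thesis using assms by (simp add: prob_space)
qed

lemma hinge_integral_reflect:
  fixes W :: "'a \<Rightarrow> real"
  assumes "integrable M W"
  shows "(\<integral>x. max 0 (a - W x) \<partial>M) = (\<integral>x. max 0 (W x - a) \<partial>M) - (\<integral>x. W x \<partial>M) + a"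
proof -
  have "(\<integral>x. max 0 (a - W x) \<partial>M) = (\<integral>x. max 0 (W x - a) - W x + a \<partial>M)"
    by (rule Bochner_Integration.integral_cong) (auto simp: max_def)
  then show ?thesis using assms by (simp add: integrable_hinge prob_space)
qed

lemma hinge_integral_tendsto_0:
  fixes W :: "'a \<Rightarrow> real"
  assumes "integrable M W"
  shows "(\<lambda>n. \<integral>x. max 0 (W x - real n) \<partial>M) \<longlonglongrightarrow> 0"
proof -
  have "(\<lambda>n. \<integral>x. max 0 (W x - real n) \<partial>M) \<longlonglongrightarrow> (\<integral>x. 0 \<partial>M)"
  proof (rule integral_dominated_convergence[where w="\<lambda>x. \<bar>W x\<bar>"])
    have "(\<lambda>n. max 0 (W x - real n)) \<longlonglongrightarrow> 0" for x
    proof (rule tendsto_eventually, rule eventually_sequentiallyI[of "nat \<lceil>W x\<rceil>"])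
      fix n assume "nat \<lceil>W x\<rceil> \<le> n"
      then show "max 0 (W x - real n) = 0" by linarith
    qed
    then show "AE x in M. (\<lambda>n. max 0 (W x - real n)) \<longlonglongrightarrow> 0" by simp
  qed (use assms in auto)
  then show ?thesis by simp
qed

lemma hinge_integral_attains:
  fixes W :: "'a \<Rightarrow> real"
  assumes W: "integrable M W" and y: "0 < y"
  obtains u where "(\<integral>x. max 0 (W x - u) \<partial>M) = y"
proof -
  define F where "F a = (\<integral>x. max 0 (W x - a) \<partial>M)" for a
  obtain n where n: "F (real n) < y"
    using order_tendstoD(2)[OF hinge_integral_tendsto_0[OF W] y]
    unfolding F_def by (auto simp: eventually_sequentially)
  define a where "a = (\<integral>x. W x \<partial>M) - y"
  define b where "b = max a (real n)"
  have "y \<le> F a" using expectation_minus_le_hinge_integral[OF W, of a] unfolding F_def a_def by simp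
  moreover have "F b \<le> y" using hinge_integral_antimono[OF W, of "real n" b] n unfolding F_def b_def by simp
  moreover have "isCont F x" for x
    unfolding continuous_at_eps_delta dist_real_def F_def
    using hinge_integral_lipschitz[OF W] by (blast intro: le_less_trans)
  ultimately obtain u where "F u = y"
    using IVT2[of F b y a] unfolding b_def by auto
  then show ?thesis using that unfolding F_def by blast
qed

lemma reflected_hinge_integral_attains:
  fixes W :: "'a \<Rightarrow> real"
  assumes "integrable M W" "0 < y"
  obtains l where "(\<integral>x. max 0 (l - W x) \<partial>M) = y"
proof -
  obtain l' where "(\<integral>x. max 0 (- W x - l') \<partial>M) = y"
    using hinge_integral_attains[of "\<lambda>x. - W x" y] assms by auto
  moreover have "(\<lambda>x. max 0 (- l' - W x)) = (\<lambda>x. max 0 (- W x - l'))"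
    by (auto simp: algebra_simps)
  ultimately show ?thesis using that[of "- l'"] by simp
qed

lemma integral_clamp:
  fixes W :: "'a \<Rightarrow> real"
  assumes "integrable M W" "l \<le> u"
  shows "(\<integral>x. max l (min u (W x)) \<partial>M)
           = (\<integral>x. W x \<partial>M) + (\<integral>x. max 0 (l - W x) \<partial>M) - (\<integral>x. max 0 (W x - u) \<partial>M)"
proof -
  have "(\<integral>x. max l (min u (W x)) \<partial>M) = (\<integral>x. W x + max 0 (l - W x) - max 0 (W x - u) \<partial>M)"
    using assms(2) by (intro Bochner_Integration.integral_cong) (auto simp: max_def min_def)
  then show ?thesis using assms(1) by (simp add: integrable_hinge integrable_hinge_reflect)
qed

lemma integral_dist_clamp:
  fixes W :: "'a \<Rightarrow> real"
  assumes "integrable M W" "l \<le> u"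
  shows "(\<integral>x. \<bar>W x - max l (min u (W x))\<bar> \<partial>M)
           = (\<integral>x. max 0 (l - W x) \<partial>M) + (\<integral>x. max 0 (W x - u) \<partial>M)"
proof -
  have "(\<integral>x. \<bar>W x - max l (min u (W x))\<bar> \<partial>M) = (\<integral>x. max 0 (l - W x) + max 0 (W x - u) \<partial>M)"
    using assms(2) by (intro Bochner_Integration.integral_cong) (auto simp: max_def min_def)
  then show ?thesis using assms(1) by (simp add: integrable_hinge integrable_hinge_reflect)
qed

lemma hinge_integral_clamp:
  fixes W :: "'a \<Rightarrow> real"
  assumes "integrable M W" "l \<le> a" "a \<le> u"
  shows "(\<integral>x. max 0 (max l (min u (W x)) - a) \<partial>M)
           = (\<integral>x. max 0 (W x - a) \<partial>M) - (\<integral>x. max 0 (W x - u) \<partial>M)"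
proof -
  have "(\<integral>x. max 0 (max l (min u (W x)) - a) \<partial>M) = (\<integral>x. max 0 (W x - a) - max 0 (W x - u) \<partial>M)"
    using assms(2,3) by (intro Bochner_Integration.integral_cong) (auto simp: max_def min_def)
  then show ?thesis using assms(1) by (simp add: integrable_hinge)
qed

lemma integral_dist_le_of_crossed_levels:
  fixes W :: "'a \<Rightarrow> real"
  assumes W: "integrable M W" and mean: "\<bar>(\<integral>x. W x \<partial>M) - m\<bar> \<le> e" and "u < l"
    and upper: "(\<integral>x. max 0 (W x - u) \<partial>M) = e + max 0 ((\<integral>x. W x \<partial>M) - m)"
    and lower: "(\<integral>x. max 0 (l - W x) \<partial>M) = e + max 0 (m - (\<integral>x. W x \<partial>M))"
  shows "(\<integral>x. \<bar>W x - m\<bar> \<partial>M) \<le> 3 * e"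
proof -
  define C where "C a = (\<integral>x. max 0 (W x - a) \<partial>M)" for a
  define P where "P a = (\<integral>x. max 0 (a - W x) \<partial>M)" for a
  have gap: "max 0 ((\<integral>x. W x \<partial>M) - m) + max 0 (m - (\<integral>x. W x \<partial>M)) \<le> e"
    using mean by linarith
  have parity: "P a = C a - (\<integral>x. W x \<partial>M) + a" for a
    unfolding P_def C_def by (rule hinge_integral_reflect[OF W])
  have "C m + P m \<le> 3 * e"
  proof (cases "u \<le> m")
    case True
    then have "C m \<le> C u" unfolding C_def by (rule hinge_integral_antimono[OF W])
    then show ?thesis using parity[of m] upper gap unfolding C_def by linarith
  next
    case False
    then have "P m \<le> P l"
      using \<open>u < l\<close> W unfolding P_def
      by (intro Bochner_Integration.integral_mono integrable_hinge_reflect) auto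
    then show ?thesis using parity[of m] parity[of l] lower gap unfolding P_def by linarith
  qed
  moreover have "(\<integral>x. \<bar>W x - m\<bar> \<partial>M) = P m + C m"
    using integral_dist_clamp[OF W order_refl, of m] unfolding P_def C_def by simp
  ultimately show ?thesis by simp
qed

lemma tendsto_integral_comp_between_affine:
  fixes W :: "'a \<Rightarrow> real"
  assumes "integrable M W" "integrable M (\<lambda>x. f (W x))" "\<And>n. integrable M (\<lambda>x. H n (W x))"
    and lower: "\<And>n y. a + b * y \<le> H n y" and upper: "\<And>n y. H n y \<le> f y"
    and lim: "\<And>y. (\<lambda>n. H n y) \<longlonglongrightarrow> f y"
  shows "(\<lambda>n. \<integral>x. H n (W x) \<partial>M) \<longlonglongrightarrow> (\<integral>x. f (W x) \<partial>M)"
proof (rule integral_dominated_convergence[where w="\<lambda>x. \<bar>a + b * W x\<bar> + \<bar>f (W x)\<bar>"])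
  fix n
  show "AE x in M. norm (H n (W x)) \<le> \<bar>a + b * W x\<bar> + \<bar>f (W x)\<bar>"
  proof (rule AE_I2)
    fix x
    have "a + b * W x \<le> H n (W x)" "H n (W x) \<le> f (W x)" by (rule lower upper)+
    then show "norm (H n (W x)) \<le> \<bar>a + b * W x\<bar> + \<bar>f (W x)\<bar>" by auto
  qed
qed (use assms in auto)

end

section \<open>Hinge domination and the convex order\<close>

locale hinge_dominated =
  M: prob_space M + N: prob_space N
  for M :: "'a measure" and N :: "'b measure" and X :: "'a \<Rightarrow> real" and Z :: "'b \<Rightarrow> real" +
  assumes integrable_X: "integrable M X" and integrable_Z: "integrable N Z"
    and expectation_eq: "(\<integral>x. X x \<partial>M) = (\<integral>x. Z x \<partial>N)"
    and hinge_integral_le: "\<And>a. (\<integral>x. max 0 (X x - a) \<partial>M) \<le> (\<integral>x. max 0 (Z x - a) \<partial>N)"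
begin

definition expectation_le :: "(real \<Rightarrow> real) \<Rightarrow> bool" where
  "expectation_le h \<longleftrightarrow> integrable M (\<lambda>x. h (X x)) \<and> integrable N (\<lambda>x. h (Z x))
     \<and> (\<integral>x. h (X x) \<partial>M) \<le> (\<integral>x. h (Z x) \<partial>N)"

lemma expectation_le_affine: "expectation_le (\<lambda>y. \<alpha> + \<beta> * y)"
  unfolding expectation_le_def using integrable_X integrable_Z expectation_eq
  by (simp add: M.prob_space N.prob_space)

lemma expectation_le_hinge:
  assumes "0 \<le> \<alpha>"
  shows "expectation_le (\<lambda>y. max 0 (\<alpha> * y + \<beta>))"
proof (cases "\<alpha> = 0")
  case True
  then show ?thesis using expectation_le_affine[of "max 0 \<beta>" 0] by simp
next
  case False
  with assms have "0 < \<alpha>" by simp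
  then have "max 0 (\<alpha> * y + \<beta>) = \<alpha> * max 0 (y - (- \<beta> / \<alpha>))" for y
    by (simp add: max_def field_simps)
  then show ?thesis
    unfolding expectation_le_def
    using M.integrable_hinge[OF integrable_X, of "- \<beta> / \<alpha>"]
      N.integrable_hinge[OF integrable_Z, of "- \<beta> / \<alpha>"] hinge_integral_le[of "- \<beta> / \<alpha>"] assms
    by (simp add: mult_left_mono)
qed

lemma expectation_le_add:
  "expectation_le h1 \<Longrightarrow> expectation_le h2 \<Longrightarrow> expectation_le (\<lambda>y. h1 y + h2 y)"
  unfolding expectation_le_def by auto

lemma expectation_le_max_tangents:
  assumes sg: "\<And>x y. f x + d x * (y - x) \<le> f y" and md: "mono d"
    and "finite S" "S \<noteq> {}"
  shows "expectation_le (max_tangents f d S)"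
  using \<open>finite S\<close> \<open>S \<noteq> {}\<close>
proof (induction S rule: finite_linorder_max_induct)
  case (insert b A)
  show ?case
  proof (cases "A = {}")
    case True
    then show ?thesis
      using expectation_le_affine[of "f b - d b * b" "d b"] by (simp add: max_tangents_singleton)
  next
    case False
    have "Max A < b" using insert False by simp
    then have "d (Max A) \<le> d b" by (simp add: monoD[OF md])
    then have "expectation_le (\<lambda>x. max_tangents f d A x
        + max 0 ((d b - d (Max A)) * x + (f b - d b * b - (f (Max A) - d (Max A) * Max A))))"
      using insert False by (intro expectation_le_add expectation_le_hinge) auto
    then show ?thesis
      using max_tangents_insert_greater[OF sg md insert(1) False] insert(2) by simp
  qed
qed simp

theorem convex_expectation_le:
  assumes "convex_on UNIV f"
    and fX: "integrable M (\<lambda>x. f (X x))" and fZ: "integrable N (\<lambda>x. f (Z x))"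
  shows "(\<integral>x. f (X x) \<partial>M) \<le> (\<integral>x. f (Z x) \<partial>N)"
proof -
  obtain d where sg: "\<And>x y. f x + d x * (y - x) \<le> f y"
    using convex_on_UNIV_obtains_subgradient[OF assms(1)] by blast
  have md: "mono d" using sg by (rule subgradient_mono)
  define H where "H n = max_tangents f d (grid n)" for n
  have le: "expectation_le (H n)" for n
    unfolding H_def by (intro expectation_le_max_tangents[OF sg md finite_grid grid_nonempty])
  have lower: "f 0 + d 0 * y \<le> H n y" for n y
    unfolding H_def using max_tangents_ge[OF finite_grid zero_in_grid, of f d y n] by simp
  have upper: "H n y \<le> f y" for n y
    unfolding H_def by (intro max_tangents_le[OF sg finite_grid grid_nonempty])
  have lim: "(\<lambda>n. H n y) \<longlonglongrightarrow> f y" for y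
    unfolding H_def using sg md by (rule tendsto_max_tangents_grid)
  have "(\<lambda>n. \<integral>x. H n (X x) \<partial>M) \<longlonglongrightarrow> (\<integral>x. f (X x) \<partial>M)"
    using le unfolding expectation_le_def
    by (intro M.tendsto_integral_comp_between_affine[OF integrable_X fX _ lower upper lim]) auto
  moreover have "(\<lambda>n. \<integral>x. H n (Z x) \<partial>N) \<longlonglongrightarrow> (\<integral>x. f (Z x) \<partial>N)"
    using le unfolding expectation_le_def
    by (intro N.tendsto_integral_comp_between_affine[OF integrable_Z fZ _ lower upper lim]) auto
  ultimately show ?thesis
    using le unfolding expectation_le_def by (intro LIMSEQ_le) auto
qed

end

lemma hinge_dominated_const_expectation:
  assumes "prob_space M" "prob_space N" "integrable N Z"
  shows "hinge_dominated M N (\<lambda>_. \<integral>x. Z x \<partial>N) Z"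
proof -
  interpret M: prob_space M by fact
  interpret N: prob_space N by fact
  show ?thesis
  proof
    show "(\<integral>x. max 0 ((\<integral>x. Z x \<partial>N) - a) \<partial>M) \<le> (\<integral>x. max 0 (Z x - a) \<partial>N)" for a
      using N.expectation_minus_le_hinge_integral[OF assms(3), of a] N.hinge_integral_nonneg[of Z a]
      by (simp add: M.prob_space)
  qed (use assms in \<open>simp_all add: M.prob_space\<close>)
qed

lemma hinge_dominated_clamp:
  assumes "prob_space M" "prob_space N" and W: "integrable M W" "integrable N Z" and "l \<le> u"
    and mean: "(\<integral>x. W x \<partial>M) + (\<integral>x. max 0 (l - W x) \<partial>M) - (\<integral>x. max 0 (W x - u) \<partial>M)
                 = (\<integral>x. Z x \<partial>N)"
    and hinge: "\<And>a. l \<le> a \<Longrightarrow>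
      (\<integral>x. max 0 (W x - a) \<partial>M) - (\<integral>x. max 0 (W x - u) \<partial>M) \<le> (\<integral>x. max 0 (Z x - a) \<partial>N)"
  shows "hinge_dominated M N (\<lambda>x. max l (min u (W x))) Z"
proof -
  interpret M: prob_space M by fact
  interpret N: prob_space N by fact
  let ?c = "\<lambda>x. max l (min u (W x))"
  have c: "integrable M ?c"
    using W by (intro integrable_max integrable_min) auto
  have mean_c: "(\<integral>x. ?c x \<partial>M) = (\<integral>x. Z x \<partial>N)"
    using M.integral_clamp[OF W(1) \<open>l \<le> u\<close>] mean by simp
  show ?thesis
  proof
    fix a
    consider "a < l" | "l \<le> a" "a \<le> u" | "u < a" by linarith
    then show "(\<integral>x. max 0 (?c x - a) \<partial>M) \<le> (\<integral>x. max 0 (Z x - a) \<partial>N)"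
    proof cases
      case 1
      then have "(\<integral>x. max 0 (?c x - a) \<partial>M) = (\<integral>x. ?c x - a \<partial>M)"
        by (intro Bochner_Integration.integral_cong) auto
      also have "\<dots> = (\<integral>x. Z x \<partial>N) - a"
        using c mean_c by (simp add: M.prob_space)
      finally show ?thesis using N.expectation_minus_le_hinge_integral[OF W(2)] by simp
    next
      case 2
      then show ?thesis using M.hinge_integral_clamp[OF W(1)] hinge by simp
    next
      case 3
      then have "(\<integral>x. max 0 (?c x - a) \<partial>M) = (\<integral>x. 0 \<partial>M)"
        using \<open>l \<le> u\<close> by (intro Bochner_Integration.integral_cong) auto
      then show ?thesis using N.hinge_integral_nonneg by simp
    qed
  qed (use assms c mean_c in auto)
qed

lemma hinge_dominated_clamp_at_levels:
  fixes W :: "'a \<Rightarrow> real" and Z :: "'b \<Rightarrow> real"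
  assumes "prob_space M" "prob_space N" and W: "integrable M W" and Z: "integrable N Z"
    and mean: "\<bar>(\<integral>x. W x \<partial>M) - (\<integral>x. Z x \<partial>N)\<bar> \<le> e"
    and hinge: "\<And>a. \<bar>(\<integral>x. max 0 (W x - a) \<partial>M) - (\<integral>x. max 0 (Z x - a) \<partial>N)\<bar> \<le> e"
    and "l \<le> u"
    and upper: "(\<integral>x. max 0 (W x - u) \<partial>M) = e + max 0 ((\<integral>x. W x \<partial>M) - (\<integral>x. Z x \<partial>N))"
    and lower: "(\<integral>x. max 0 (l - W x) \<partial>M) = e + max 0 ((\<integral>x. Z x \<partial>N) - (\<integral>x. W x \<partial>M))"
  shows "hinge_dominated M N (\<lambda>x. max l (min u (W x))) Z"
    and "l \<le> (\<integral>x. Z x \<partial>N)" "(\<integral>x. Z x \<partial>N) \<le> u"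
    and "(\<integral>x. \<bar>W x - max l (min u (W x))\<bar> \<partial>M) \<le> 3 * e"
proof -
  interpret M: prob_space M by fact
  have gap: "max 0 ((\<integral>x. W x \<partial>M) - (\<integral>x. Z x \<partial>N)) + max 0 ((\<integral>x. Z x \<partial>N) - (\<integral>x. W x \<partial>M)) \<le> e"
    using mean by linarith
  show dom: "hinge_dominated M N (\<lambda>x. max l (min u (W x))) Z"
  proof (rule hinge_dominated_clamp[OF assms(1,2) W Z \<open>l \<le> u\<close>])
    show "(\<integral>x. W x \<partial>M) + (\<integral>x. max 0 (l - W x) \<partial>M) - (\<integral>x. max 0 (W x - u) \<partial>M) = (\<integral>x. Z x \<partial>N)"
      using upper lower by linarith
    show "(\<integral>x. max 0 (W x - a) \<partial>M) - (\<integral>x. max 0 (W x - u) \<partial>M) \<le> (\<integral>x. max 0 (Z x - a) \<partial>N)" for a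
      using hinge[of a] upper by linarith
  qed
  then interpret D: hinge_dominated M N "\<lambda>x. max l (min u (W x))" Z .
  show "l \<le> (\<integral>x. Z x \<partial>N)" "(\<integral>x. Z x \<partial>N) \<le> u"
    using M.integral_ge_const[OF D.integrable_X, of l] M.integral_le_const[OF D.integrable_X, of u]
      \<open>l \<le> u\<close> unfolding D.expectation_eq by auto
  show "(\<integral>x. \<bar>W x - max l (min u (W x))\<bar> \<partial>M) \<le> 3 * e"
    using M.integral_dist_clamp[OF W \<open>l \<le> u\<close>] upper lower gap by linarith
qed

lemma obtain_hinge_dominated_perturbation:
  fixes W :: "'a \<Rightarrow> real" and Z :: "'b \<Rightarrow> real"
  assumes "prob_space M" "prob_space N" and W: "integrable M W" and Z: "integrable N Z"
    and mean: "\<bar>(\<integral>x. W x \<partial>M) - (\<integral>x. Z x \<partial>N)\<bar> \<le> e"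
    and hinge: "\<And>a. \<bar>(\<integral>x. max 0 (W x - a) \<partial>M) - (\<integral>x. max 0 (Z x - a) \<partial>N)\<bar> \<le> e"
  obtains c where "hinge_dominated M N c Z"
    and "\<And>x. min (W x) (\<integral>x. Z x \<partial>N) \<le> c x \<and> c x \<le> max (W x) (\<integral>x. Z x \<partial>N)"
    and "(\<integral>x. \<bar>W x - c x\<bar> \<partial>M) \<le> 3 * e"
proof -
  interpret M: prob_space M by fact
  have "0 \<le> e" using hinge[of 0] by linarith
  then consider "e = 0" | "0 < e" by linarith
  then show ?thesis
  proof cases
    case 1
    \<comment> \<open>A level with upper hinge integral 0 need not exist, but W itself works.\<close>
    have "hinge_dominated M N W Z"
      using assms mean hinge 1 by (simp add: hinge_dominated_def hinge_dominated_axioms_def)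
    then show ?thesis using that[of W] 1 by simp
  next
    case 2
    let ?m = "\<integral>x. Z x \<partial>N" and ?mW = "\<integral>x. W x \<partial>M"
    \<comment> \<open>Clipping at these levels moves the mean exactly to ?m at cost 2e + |?m - ?mW| \<le> 3e,
      and the margin e in the upper tail absorbs the hinge discrepancy. If the levels cross,
      the constant ?m is cheap enough instead.\<close>
    have pos: "0 < e + max 0 (?mW - ?m)" "0 < e + max 0 (?m - ?mW)"
      using 2 by auto
    obtain u where upper: "(\<integral>x. max 0 (W x - u) \<partial>M) = e + max 0 (?mW - ?m)"
      using M.hinge_integral_attains[OF W pos(1)] by blast
    obtain l where lower: "(\<integral>x. max 0 (l - W x) \<partial>M) = e + max 0 (?m - ?mW)"
      using M.reflected_hinge_integral_attains[OF W pos(2)] by blast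
    show ?thesis
    proof (cases "l \<le> u")
      case True
      note clamp = hinge_dominated_clamp_at_levels[OF assms True upper lower]
      have "min (W x) ?m \<le> max l (min u (W x)) \<and> max l (min u (W x)) \<le> max (W x) ?m" for x
        using clamp(2,3) by linarith
      then show ?thesis using that[OF clamp(1) _ clamp(4)] by blast
    next
      case False
      have "(\<integral>x. \<bar>W x - ?m\<bar> \<partial>M) \<le> 3 * e"
        using False by (intro M.integral_dist_le_of_crossed_levels[OF W mean _ upper lower]) simp
      then show ?thesis
        using that[OF hinge_dominated_const_expectation[OF assms(1,2) Z]] by simp
    qed
  qed
qed

section \<open>Friendly perturbations\<close>

lemma distr_in_friendly:
  fixes p :: "real measure" and \<phi> g :: "real \<Rightarrow> real"
  assumes p: "real_distr p" and g: "g \<in> borel_measurable borel" and \<phi>: "\<phi> \<in> borel_measurable borel"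
    and "integrable p (\<lambda>x. g (\<phi> x))"
    and "(\<integral>\<^sup>+x. ennreal \<bar>x - \<phi> x\<bar> \<partial>p) \<le> ennreal \<eta>"
    and between: "\<And>x. min (g x) (\<integral>x. g (\<phi> x) \<partial>p) \<le> g (\<phi> x) \<and> g (\<phi> x) \<le> max (g x) (\<integral>x. g (\<phi> x) \<partial>p)"
  shows "distr p borel \<phi> \<in> friendly p \<eta> g"
proof -
  interpret P: prob_space p using p unfolding real_distr_def by auto
  have sets_p: "sets p = sets borel" using p unfolding real_distr_def by auto
  have \<phi>_p: "\<phi> \<in> borel_measurable p" using \<phi> by (simp add: measurable_cong_sets[OF sets_p refl])
  have graph: "(\<lambda>x. (x, \<phi> x)) \<in> measurable p (borel \<Otimes>\<^sub>M borel)"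
    using \<phi>_p by (intro measurable_Pair) (simp_all add: measurable_cong_sets[OF sets_p refl])
  define r where "r = distr p borel \<phi>"
  define \<pi> where "\<pi> = distr p (borel \<Otimes>\<^sub>M borel) (\<lambda>x. (x, \<phi> x))"
  have "coupling \<pi> p r"
    unfolding coupling_def
  proof (intro conjI)
    show "prob_space \<pi>" unfolding \<pi>_def by (rule P.prob_space_distr[OF graph])
    show "sets \<pi> = sets (borel \<Otimes>\<^sub>M borel)" unfolding \<pi>_def by simp
    have "distr \<pi> borel fst = distr p borel (\<lambda>x. x)"
      unfolding \<pi>_def using distr_distr[OF measurable_fst graph] by (simp add: comp_def)
    also have "\<dots> = p" using distr_id2[of borel p] sets_p by simp
    finally show "distr \<pi> borel fst = p" .
    show "distr \<pi> borel snd = r"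
      unfolding \<pi>_def r_def using distr_distr[OF measurable_snd graph] by (simp add: comp_def)
  qed
  moreover have "(\<integral>\<^sup>+ z. ennreal \<bar>fst z - snd z\<bar> \<partial>\<pi>) \<le> ennreal \<eta>"
    unfolding \<pi>_def using assms(5) by (simp add: nn_integral_distr[OF graph])
  moreover have "(\<integral>y. g y \<partial>r) = (\<integral>x. g (\<phi> x) \<partial>p)"
    unfolding r_def by (rule integral_distr[OF \<phi>_p g])
  then have "AE z in \<pi>. min (g (fst z)) (\<integral>y. g y \<partial>r) \<le> g (snd z)
                    \<and> g (snd z) \<le> max (g (fst z)) (\<integral>y. g y \<partial>r)"
    unfolding \<pi>_def using between g by (simp add: AE_distr_iff[OF graph])
  moreover have "real_distr r" "integrable r g"
    unfolding r_def real_distr_def using P.prob_space_distr[OF \<phi>_p] assms(4)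
    by (simp_all add: integrable_distr_eq[OF \<phi>_p g])
  ultimately show ?thesis unfolding friendly_def r_def[symmetric] by blast
qed

lemma friendly_mono: "\<eta> \<le> \<eta>' \<Longrightarrow> r \<in> friendly p \<eta> g \<Longrightarrow> r \<in> friendly p \<eta>' g"
  unfolding friendly_def using ennreal_leI order_trans by blast

lemma self_in_friendly:
  assumes "real_distr q" "g \<in> borel_measurable borel" "integrable q g" "0 \<le> \<eta>"
  shows "q \<in> friendly q \<eta> g"
proof -
  have "distr q borel (\<lambda>x. x) \<in> friendly q \<eta> g"
    using assms by (intro distr_in_friendly) auto
  moreover have "distr q borel (\<lambda>x. x) = q"
    using distr_id2[of borel q] assms(1) unfolding real_distr_def by simp
  ultimately show ?thesis by simp
qed

lemma convex_order_wrt_distr: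
  fixes p q :: "real measure" and g \<phi> :: "real \<Rightarrow> real"
  assumes p: "real_distr p" and g: "g \<in> borel_measurable borel" and \<phi>: "\<phi> \<in> borel_measurable borel"
    and "hinge_dominated p q (\<lambda>x. g (\<phi> x)) g"
  shows "convex_order_wrt g (distr p borel \<phi>) q"
  unfolding convex_order_wrt_def
proof (intro allI impI)
  interpret hinge_dominated p q "\<lambda>x. g (\<phi> x)" g by fact
  fix f :: "real \<Rightarrow> real"
  assume f: "convex_on UNIV f" and fr: "integrable (distr p borel \<phi>) (\<lambda>x. f (g x))"
    and fq: "integrable q (\<lambda>x. f (g x))"
  have sets_p: "sets p = sets borel" using p unfolding real_distr_def by simp
  have \<phi>_p: "\<phi> \<in> borel_measurable p"
    using \<phi> by (simp only: measurable_cong_sets[OF sets_p refl])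
  have "f \<in> borel_measurable borel"
    using convex_on_continuous[OF open_UNIV f] by (rule borel_measurable_continuous_onI)
  then have fg: "(\<lambda>x. f (g x)) \<in> borel_measurable borel" using g by measurable
  have "(\<integral>x. f (g x) \<partial>distr p borel \<phi>) = (\<integral>x. f (g (\<phi> x)) \<partial>p)"
    by (rule integral_distr[OF \<phi>_p fg])
  also have "\<dots> \<le> (\<integral>x. f (g x) \<partial>q)"
  proof (rule convex_expectation_le[OF f _ fq])
    show "integrable p (\<lambda>x. f (g (\<phi> x)))"
      using fr integrable_distr_eq[OF \<phi>_p fg] by simp
  qed
  finally show "(\<integral>x. f (g x) \<partial>distr p borel \<phi>) \<le> (\<integral>x. f (g x) \<partial>q)" .
qed

lemma exists_friendly_convex_order_below:
  fixes p q :: "real measure" and g :: "real \<Rightarrow> real" and \<Lambda> :: "real \<Rightarrow> real \<Rightarrow> real"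
  assumes p: "real_distr p" and q: "real_distr q" and g: "g \<in> borel_measurable borel"
    and gp: "integrable p g" and gq: "integrable q g"
    and mean: "\<bar>(\<integral>x. g x \<partial>p) - (\<integral>x. g x \<partial>q)\<bar> \<le> e"
    and hinge: "\<And>a. \<bar>(\<integral>x. max 0 (g x - a) \<partial>p) - (\<integral>x. max 0 (g x - a) \<partial>q)\<bar> \<le> e"
    and \<Lambda>: "(\<lambda>(x, c). \<Lambda> x c) \<in> borel_measurable (borel \<Otimes>\<^sub>M borel)"
    and lift: "\<And>x c. min (g x) (\<integral>x. g x \<partial>q) \<le> c \<Longrightarrow> g (\<Lambda> x c) = c \<and> \<bar>x - \<Lambda> x c\<bar> = \<bar>g x - c\<bar>"
  shows "\<exists>r \<in> friendly p (3 * e) g. convex_order_wrt g r q"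
proof -
  have P: "prob_space p" and sets_p: "sets p = sets borel" and Q: "prob_space q"
    using p q unfolding real_distr_def by auto
  obtain c where dom: "hinge_dominated p q c g"
    and between: "\<And>x. min (g x) (\<integral>x. g x \<partial>q) \<le> c x \<and> c x \<le> max (g x) (\<integral>x. g x \<partial>q)"
    and cost: "(\<integral>x. \<bar>g x - c x\<bar> \<partial>p) \<le> 3 * e"
    using obtain_hinge_dominated_perturbation[OF P Q gp gq mean hinge] by blast
  interpret D: hinge_dominated p q c g by (rule dom)
  define \<phi> where "\<phi> x = \<Lambda> x (c x)" for x
  have g\<phi>: "g (\<phi> x) = c x" and dist: "\<bar>x - \<phi> x\<bar> = \<bar>g x - c x\<bar>" for x
    using lift between unfolding \<phi>_def by auto
  have "c \<in> borel_measurable p" using D.integrable_X by auto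
  then have "c \<in> borel_measurable borel" by (simp only: measurable_cong_sets[OF sets_p refl])
  then have "(\<lambda>x. (x, c x)) \<in> measurable borel (borel \<Otimes>\<^sub>M borel)"
    by (intro measurable_Pair measurable_ident_sets) auto
  from measurable_compose[OF this \<Lambda>] have \<phi>: "\<phi> \<in> borel_measurable borel"
    unfolding \<phi>_def by simp
  have "(\<integral>\<^sup>+x. ennreal \<bar>x - \<phi> x\<bar> \<partial>p) = ennreal (\<integral>x. \<bar>g x - c x\<bar> \<partial>p)"
    unfolding dist using gp D.integrable_X by (intro nn_integral_eq_integral integrable_abs integrable_diff) auto
  also have "\<dots> \<le> ennreal (3 * e)" using cost by (rule ennreal_leI)
  finally have "distr p borel \<phi> \<in> friendly p (3 * e) g"
    using D.integrable_X between D.expectation_eq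
    by (intro distr_in_friendly[OF p g \<phi>]) (simp_all add: g\<phi>)
  moreover have "convex_order_wrt g (distr p borel \<phi>) q"
    using dom by (intro convex_order_wrt_distr[OF p g \<phi>]) (simp add: g\<phi>)
  ultimately show ?thesis by blast
qed

lemma hinge_in_Uprime: "\<bar>v\<bar> \<le> 1 \<Longrightarrow> (\<lambda>x. max 0 (v * x - a)) \<in> Uprime"
  unfolding Uprime_def by blast

lemma linear_in_Uprime: "\<bar>v\<bar> \<le> 1 \<Longrightarrow> (\<lambda>x. v * x) \<in> Uprime"
  unfolding Uprime_def by blast

lemma integral_diff_le_W1tilde:
  assumes "W1tilde p q \<le> ereal \<epsilon>" "u \<in> Uprime"
  shows "\<bar>(\<integral>x. u x \<partial>p) - (\<integral>x. u x \<partial>q)\<bar> \<le> \<epsilon>"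
proof -
  have "ereal \<bar>(\<integral>x. u x \<partial>p) - (\<integral>x. u x \<partial>q)\<bar> \<le> W1tilde p q"
    unfolding W1tilde_def using assms(2) by (rule SUP_upper)
  from order_trans[OF this assms(1)] show ?thesis by simp
qed

lemma hinge_integral_abs:
  fixes M :: "real measure"
  assumes "prob_space M" "integrable M (\<lambda>x. x)"
  shows "(\<integral>x. max 0 (\<bar>x\<bar> - a) \<partial>M)
           = (\<integral>x. max 0 (x - max a 0) \<partial>M) + (\<integral>x. max 0 (- x - max a 0) \<partial>M) + (max a 0 - a)"
proof -
  interpret prob_space M by fact
  have "(\<integral>x. max 0 (\<bar>x\<bar> - a) \<partial>M)
      = (\<integral>x. max 0 (x - max a 0) + max 0 (- x - max a 0) + (max a 0 - a) \<partial>M)"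
    by (intro Bochner_Integration.integral_cong) (auto simp: max_def)
  then show ?thesis
    using integrable_hinge[OF assms(2)] integrable_hinge[of "\<lambda>x. - x"] assms(2)
    by (simp add: prob_space)
qed

lemma W1tilde_bounds_hinge_integrals:
  assumes "real_distr p" "real_distr q" "integrable p (\<lambda>x. x)" "integrable q (\<lambda>x. x)"
    and W: "W1tilde p q \<le> ereal \<epsilon>" and g: "g = (\<lambda>x. x) \<or> g = abs"
  shows "\<bar>(\<integral>x. max 0 (g x - a) \<partial>p) - (\<integral>x. max 0 (g x - a) \<partial>q)\<bar> \<le> 2 * \<epsilon>"
    and "\<bar>(\<integral>x. g x \<partial>p) - (\<integral>x. g x \<partial>q)\<bar> \<le> 2 * \<epsilon>"
proof -
  have "0 \<le> \<epsilon>" using integral_diff_le_W1tilde[OF W linear_in_Uprime[of 0]] by simp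
  have right: "\<bar>(\<integral>x. max 0 (x - b) \<partial>p) - (\<integral>x. max 0 (x - b) \<partial>q)\<bar> \<le> \<epsilon>"
    and left: "\<bar>(\<integral>x. max 0 (- x - b) \<partial>p) - (\<integral>x. max 0 (- x - b) \<partial>q)\<bar> \<le> \<epsilon>" for b
    using integral_diff_le_W1tilde[OF W hinge_in_Uprime[of 1 b]]
      integral_diff_le_W1tilde[OF W hinge_in_Uprime[of "- 1" b]] by simp_all
  have abs: "\<bar>(\<integral>x. max 0 (\<bar>x\<bar> - a) \<partial>p) - (\<integral>x. max 0 (\<bar>x\<bar> - a) \<partial>q)\<bar> \<le> 2 * \<epsilon>" for a
    using hinge_integral_abs[of p a] hinge_integral_abs[of q a] assms(1-4)
      right[of "max a 0"] left[of "max a 0"] unfolding real_distr_def by (simp add: abs_le_iff)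
  from g show "\<bar>(\<integral>x. max 0 (g x - a) \<partial>p) - (\<integral>x. max 0 (g x - a) \<partial>q)\<bar> \<le> 2 * \<epsilon>"
    using right[of a] \<open>0 \<le> \<epsilon>\<close> abs[of a] by auto
  from g show "\<bar>(\<integral>x. g x \<partial>p) - (\<integral>x. g x \<partial>q)\<bar> \<le> 2 * \<epsilon>"
    using integral_diff_le_W1tilde[OF W linear_in_Uprime[of 1]] \<open>0 \<le> \<epsilon>\<close> abs[of 0] by auto
qed

lemma obtain_lift_id_or_abs:
  fixes g :: "real \<Rightarrow> real"
  assumes "g = (\<lambda>x. x) \<or> g = abs" and "g = abs \<Longrightarrow> 0 \<le> m"
  obtains \<Lambda> :: "real \<Rightarrow> real \<Rightarrow> real"
  where "(\<lambda>(x, c). \<Lambda> x c) \<in> borel_measurable (borel \<Otimes>\<^sub>M borel)"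
    and "\<And>x c. min (g x) m \<le> c \<Longrightarrow> g (\<Lambda> x c) = c \<and> \<bar>x - \<Lambda> x c\<bar> = \<bar>g x - c\<bar>"
  using assms(1)
proof
  assume "g = (\<lambda>x. x)"
  then show ?thesis by (intro that[of "\<lambda>x c. c"]) simp_all
next
  assume abs: "g = abs"
  show ?thesis
  proof (rule that[of "\<lambda>x c. if x < 0 then - c else c"])
    show "(\<lambda>(x :: real, c). if x < 0 then - c else c :: real) \<in> borel_measurable (borel \<Otimes>\<^sub>M borel)"
      by measurable
    fix x c :: real
    assume "min (g x) m \<le> c"
    then have "0 \<le> c" using assms(2)[OF abs] unfolding abs by linarith
    then show "g (if x < 0 then - c else c) = c \<and> \<bar>x - (if x < 0 then - c else c)\<bar> = \<bar>g x - c\<bar>"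
      unfolding abs by auto
  qed
qed

theorem lemma4p7:
  fixes p q :: "real measure" and \<epsilon> :: real and g :: "real \<Rightarrow> real"
  assumes "real_distr p" and "real_distr q"
    and "integrable p (\<lambda>x. x)" and "integrable q (\<lambda>x. x)"
    and "W1tilde p q \<le> ereal \<epsilon>"
    and "g = (\<lambda>x. x) \<or> g = abs"
  shows "\<exists>rp rq. rp \<in> friendly p (7 * \<epsilon>) g \<and> rq \<in> friendly q (7 * \<epsilon>) g
                 \<and> convex_order_wrt g rp rq"
proof -
  have \<epsilon>: "0 \<le> \<epsilon>" using integral_diff_le_W1tilde[OF assms(5) linear_in_Uprime[of 0]] by simp
  have g: "g \<in> borel_measurable borel" using assms(6) by auto
  have gp: "integrable p g" using assms(3,6) integrable_abs[OF assms(3)] by auto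
  have gq: "integrable q g" using assms(4,6) integrable_abs[OF assms(4)] by auto
  obtain \<Lambda> where \<Lambda>: "(\<lambda>(x, c). \<Lambda> x c) \<in> borel_measurable (borel \<Otimes>\<^sub>M borel)"
    and lift: "\<And>x c. min (g x) (\<integral>x. g x \<partial>q) \<le> c \<Longrightarrow> g (\<Lambda> x c) = c \<and> \<bar>x - \<Lambda> x c\<bar> = \<bar>g x - c\<bar>"
    using obtain_lift_id_or_abs[OF assms(6), of "\<integral>x. g x \<partial>q"] by auto
  obtain r where r: "r \<in> friendly p (3 * (2 * \<epsilon>)) g" "convex_order_wrt g r q"
    using exists_friendly_convex_order_below[OF assms(1,2) g gp gq
        W1tilde_bounds_hinge_integrals(2)[OF assms] W1tilde_bounds_hinge_integrals(1)[OF assms] \<Lambda> lift]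
    by blast
  have "r \<in> friendly p (7 * \<epsilon>) g" using friendly_mono[OF _ r(1)] \<epsilon> by simp
  moreover have "q \<in> friendly q (7 * \<epsilon>) g" using self_in_friendly[OF assms(2) g gq] \<epsilon> by simp
  ultimately show ?thesis using r(2) by blast
qed

end
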